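(* Let $k$ be a positive integer and $p$ a prime. Then: (1) every integer of the form $p_1^{2p^k-1}$ with $p_1$ prime is $p^k$-$T_0T^\ast$-perfect; (2) if $k\ge 2$ and $p$ is odd, then every integer of the form $p_1^{(p^{a_1}-1)/2}\cdot p_2^{(p^{a_2}-1)/2}$, where $p_1\neq p_2$ are primes and $a_1,a_2$ are positive integers with $a_1+a_2=k$, is $p^k$-$T_0T^\ast$-perfect; (3) every integer $n>1$ that is $p^k$-$T_0T^\ast$-perfect is either of the form $p_1^{2p^k-1}$ with $p_1$ prime, or (with $p$ odd) of the form $p_1^{(p^{a_1}-1)/2}\cdot p_2^{(p^{a_2}-1)/2}$ with distinct primes $p_1,p_2$ and positive integers $a_1,a_2$ with $a_1+a_2=k$.
   Context: For a positive integer $m$, $T(m)$ denotes the product of all positive divisors of $m$, and $T^\ast(m)$ the product of all unitary divisors of $m$ (divisors $d$ with $\gcd(d,m/d)=1$). For an integer $K\ge 2$, an integer $n>1$ is called $K$-$T_0T^\ast$-perfect if $T(T^\ast(n))=n^K$. *)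

theory Defs
  imports "HOL-Computational_Algebra.Primes"
begin

definition divisor_prod :: "nat \<Rightarrow> nat" where
  "divisor_prod m = (\<Prod>d\<in>{d. d dvd m}. d)"

definition unitary_divisors :: "nat \<Rightarrow> nat set" where
  "unitary_divisors m = {d. d dvd m \<and> coprime d (m div d)}"

definition unitary_divisor_prod :: "nat \<Rightarrow> nat" where
  "unitary_divisor_prod m = (\<Prod>d\<in>unitary_divisors m. d)"

definition T0Tstar_perfect :: "nat \<Rightarrow> nat \<Rightarrow> bool" where
  "T0Tstar_perfect K n \<longleftrightarrow> 2 \<le> K \<and> 1 < n \<and> divisor_prod (unitary_divisor_prod n) = n ^ K"

end

theory Submission
  imports Defs "HOL-Library.FuncSet" "HOL-Number_Theory.Totient"
begin

text \<open>
  Let \<open>s\<close> be the number of distinct prime factors of \<open>n\<close>. Unitary divisors of \<open>n\<close> correspond to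
  subsets of its prime factors and come in pairs \<open>d, n/d\<close>, so \<open>T\<^sup>*(n) = n^(2^(s-1))\<close>; the same
  pairing for all divisors of this power gives \<open>T(T\<^sup>*(n))\<^sup>2 = n^(2^(s-1) X)\<close> with
  \<open>X = \<Prod>\<^sub>q (2^(s-1) v\<^sub>q(n) + 1)\<close>. Hence \<open>n\<close> is \<open>K\<close>-perfect iff \<open>2K = 2^(s-1) X\<close>. For
  \<open>K = p^k\<close> the factor \<open>X\<close> is odd and exceeds 1 once \<open>s \<ge> 2\<close>, which rules out \<open>s \<ge> 3\<close>;
  \<open>s = 1\<close> gives \<open>v + 1 = 2p^k\<close>, and \<open>s = 2\<close> gives \<open>p^k = (2v\<^sub>1 + 1)(2v\<^sub>2 + 1)\<close>, whose factors
  must be powers of \<open>p\<close>.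
\<close>

lemma prod_divisors_closed_under_complement_square:
  fixes m :: nat
  assumes m: "m > 0" and D: "D \<subseteq> {d. d dvd m}" and closed: "\<And>d. d \<in> D \<Longrightarrow> m div d \<in> D"
  shows "(\<Prod>d\<in>D. d) ^ 2 = m ^ card D"
proof -
  have "(\<Prod>d\<in>D. d) = (\<Prod>d\<in>D. m div d)"
    using D m by (intro prod.reindex_bij_witness[of D "\<lambda>d. m div d" "\<lambda>d. m div d"])
      (auto simp: closed div_div_eq_right)
  hence "(\<Prod>d\<in>D. d) ^ 2 = (\<Prod>d\<in>D. d * (m div d))"
    by (simp add: power2_eq_square prod.distrib)
  also have "\<dots> = (\<Prod>d\<in>D. m)"
    using D by (intro prod.cong) auto
  finally show ?thesis by simp
qed

lemma divisor_prod_square: "m > 0 \<Longrightarrow> divisor_prod m ^ 2 = m ^ card {d. d dvd m}"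
  unfolding divisor_prod_def
  by (rule prod_divisors_closed_under_complement_square) auto

lemma unitary_divisor_prod_square:
  "n > 0 \<Longrightarrow> unitary_divisor_prod n ^ 2 = n ^ card (unitary_divisors n)"
  unfolding unitary_divisor_prod_def unitary_divisors_def
  by (rule prod_divisors_closed_under_complement_square) (auto simp: coprime_commute)

lemma coprime_iff_multiplicity_nat:
  fixes a b :: nat
  assumes "a > 0" "b > 0"
  shows "coprime a b \<longleftrightarrow> (\<forall>p. prime p \<longrightarrow> multiplicity p a = 0 \<or> multiplicity p b = 0)"
proof -
  have "coprime a b \<longleftrightarrow> (\<forall>p. prime p \<longrightarrow> \<not> (p dvd a \<and> p dvd b))"
  proof
    assume "coprime a b"
    thus "\<forall>p. prime p \<longrightarrow> \<not> (p dvd a \<and> p dvd b)"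
      using coprime_common_divisor not_prime_unit by blast
  next
    assume "\<forall>p. prime p \<longrightarrow> \<not> (p dvd a \<and> p dvd b)"
    thus "coprime a b"
      using prime_factor_nat[of "gcd a b"] by (auto simp: coprime_iff_gcd_eq_1)
  qed
  thus ?thesis
    using assms by (auto simp: prime_multiplicity_gt_zero_iff[symmetric])
qed

lemma unitary_divisors_conv_multiplicity:
  fixes n :: nat
  assumes n: "n > 0"
  shows "unitary_divisors n =
    {d. d dvd n \<and> (\<forall>p\<in>prime_factors n. multiplicity p d \<in> {0, multiplicity p n})}"
proof -
  have "coprime d (n div d) \<longleftrightarrow> (\<forall>p\<in>prime_factors n. multiplicity p d \<in> {0, multiplicity p n})"
    if "d dvd n" for d
  proof -
    obtain e where e: "n = d * e" using \<open>d dvd n\<close> by blast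
    with n have pos: "d > 0" "e > 0" by auto
    have split: "multiplicity p n = multiplicity p d + multiplicity p e" if "prime p" for p
      using e pos that by (simp add: prime_elem_multiplicity_mult_distrib)
    have "coprime d (n div d) \<longleftrightarrow> (\<forall>p. prime p \<longrightarrow> multiplicity p d = 0 \<or> multiplicity p e = 0)"
      using e pos by (simp add: coprime_iff_multiplicity_nat)
    also have "\<dots> \<longleftrightarrow> (\<forall>p\<in>prime_factors n. multiplicity p d \<in> {0, multiplicity p n})"
      using split n by (auto simp: prime_factors_multiplicity)
    finally show ?thesis .
  qed
  thus ?thesis
    unfolding unitary_divisors_def by blast
qed

lemma divisors_eq_if_multiplicity_eq:
  fixes n d d' :: nat
  assumes n: "n > 0" and "d dvd n" "d' dvd n"
    and eq: "\<And>p. p \<in> prime_factors n \<Longrightarrow> multiplicity p d = multiplicity p d'"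
  shows "d = d'"
proof (rule multiplicity_eq_nat)
  show "d > 0" "d' > 0" using assms by (auto intro: dvd_pos_nat)
  fix q :: nat assume q: "prime q"
  show "multiplicity q d = multiplicity q d'"
  proof (cases "q \<in> prime_factors n")
    case False
    hence "multiplicity q n = 0" using q n by (simp add: prime_factors_multiplicity)
    thus ?thesis using assms dvd_imp_multiplicity_le by (metis le_zero_eq not_gr0)
  qed (rule eq)
qed

lemma prod_prime_factors_power_dvd:
  fixes n :: nat
  assumes n: "n > 0" and le: "\<And>p. p \<in> prime_factors n \<Longrightarrow> g p \<le> multiplicity p n"
  shows "(\<Prod>p\<in>prime_factors n. p ^ g p) dvd n"
proof (rule multiplicity_le_imp_dvd)
  show "(\<Prod>p\<in>prime_factors n. p ^ g p) \<noteq> 0" by (auto simp: prime_gt_0_nat)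
  show "multiplicity q (\<Prod>p\<in>prime_factors n. p ^ g p) \<le> multiplicity q n" if "prime q" for q
  proof -
    have "multiplicity q (\<Prod>p\<in>prime_factors n. p ^ g p) = (if q \<in> prime_factors n then g q else 0)"
      using that by (intro multiplicity_prod_prime_powers) auto
    thus ?thesis using le[of q] by simp
  qed
qed

lemma card_divisors_with_multiplicities:
  fixes n :: nat
  assumes n: "n > 0" and A: "\<And>p. p \<in> prime_factors n \<Longrightarrow> A p \<subseteq> {0..multiplicity p n}"
  shows "card {d. d dvd n \<and> (\<forall>p\<in>prime_factors n. multiplicity p d \<in> A p)}
    = (\<Prod>p\<in>prime_factors n. card (A p))"
proof -
  define P where "P = prime_factors n"
  define S where "S = {d. d dvd n \<and> (\<forall>p\<in>P. multiplicity p d \<in> A p)}"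
  define exps where "exps d = restrict (\<lambda>p. multiplicity p d) P" for d :: nat
  have "inj_on exps S"
  proof (rule inj_onI)
    fix d d' assume "d \<in> S" "d' \<in> S" and eq: "exps d = exps d'"
    show "d = d'"
    proof (rule divisors_eq_if_multiplicity_eq[OF n])
      show "d dvd n" "d' dvd n" using \<open>d \<in> S\<close> \<open>d' \<in> S\<close> by (simp_all add: S_def)
      show "multiplicity p d = multiplicity p d'" if "p \<in> prime_factors n" for p
        using fun_cong[OF eq, of p] that by (simp add: exps_def P_def)
    qed
  qed
  moreover have "exps ` S = PiE P A"
  proof
    show "exps ` S \<subseteq> PiE P A" unfolding S_def exps_def by auto
    show "PiE P A \<subseteq> exps ` S"
    proof
      fix g assume g: "g \<in> PiE P A"
      define d where "d = (\<Prod>p\<in>P. p ^ g p)"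
      have mult_d: "multiplicity q d = g q" if "q \<in> P" for q
      proof -
        have "prime q" using that unfolding P_def by auto
        hence "multiplicity q d = (if q \<in> P then g q else 0)"
          unfolding d_def P_def by (intro multiplicity_prod_prime_powers) auto
        with that show ?thesis by simp
      qed
      have g_A: "g q \<in> A q" if "q \<in> P" for q using g that by (auto simp: PiE_iff)
      have "d dvd n"
        using A g_A unfolding d_def P_def by (intro prod_prime_factors_power_dvd[OF n]) fastforce
      moreover have "\<forall>p\<in>P. multiplicity p d \<in> A p" using g_A mult_d by simp
      moreover have "exps d = g"
        using mult_d PiE_arb[OF g] by (auto simp: exps_def)
      ultimately show "g \<in> exps ` S"
        unfolding S_def by blast
    qed
  qed
  ultimately have "card S = card (PiE P A)" by (metis card_image)
  thus ?thesis unfolding S_def P_def by (simp add: card_PiE)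
qed

lemma card_divisors_nat:
  fixes n :: nat
  assumes "n > 0"
  shows "card {d. d dvd n} = (\<Prod>p\<in>prime_factors n. multiplicity p n + 1)"
proof -
  have "{d. d dvd n} = {d. d dvd n \<and> (\<forall>p\<in>prime_factors n. multiplicity p d \<in> {0..multiplicity p n})}"
    using assms dvd_imp_multiplicity_le by auto
  also have "card \<dots> = (\<Prod>p\<in>prime_factors n. card {0..multiplicity p n})"
    by (rule card_divisors_with_multiplicities[OF assms]) simp
  finally show ?thesis by simp
qed

lemma card_unitary_divisors:
  fixes n :: nat
  assumes "n > 0"
  shows "card (unitary_divisors n) = 2 ^ card (prime_factors n)"
proof -
  have "card (unitary_divisors n) = (\<Prod>p\<in>prime_factors n. card {0, multiplicity p n})"
    unfolding unitary_divisors_conv_multiplicity[OF assms]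
    by (rule card_divisors_with_multiplicities[OF assms]) auto
  also have "\<dots> = (\<Prod>p\<in>prime_factors n. 2)"
    by (intro prod.cong refl) (auto simp: prime_factors_multiplicity)
  finally show ?thesis by simp
qed

lemma unitary_divisor_prod_eq_power:
  fixes n :: nat
  assumes "n > 0"
  shows "unitary_divisor_prod n = n ^ 2 ^ (card (prime_factors n) - 1)"
proof (cases "n = 1")
  case True
  have "unitary_divisors 1 = {1}" by (auto simp: unitary_divisors_def)
  with True show ?thesis by (simp add: unitary_divisor_prod_def)
next
  case False
  define s where "s = card (prime_factors n)"
  from False assms obtain q where "q \<in> prime_factors n"
    using prime_factor_nat[of n] by (auto simp: in_prime_factors_iff)
  hence "s > 0" unfolding s_def by (auto simp: card_gt_0_iff)
  have "card (unitary_divisors n) = 2 ^ s"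
    using assms unfolding s_def by (rule card_unitary_divisors)
  also have "\<dots> = 2 ^ (s - 1) * 2"
    using \<open>s > 0\<close> by (cases s) simp_all
  finally have "card (unitary_divisors n) = 2 ^ (s - 1) * 2" .
  hence "unitary_divisor_prod n ^ 2 = (n ^ 2 ^ (s - 1)) ^ 2"
    using assms by (simp only: unitary_divisor_prod_square power_mult)
  thus ?thesis unfolding s_def by (rule power_eq_imp_eq_base) simp_all
qed

lemma card_divisors_power:
  fixes n e :: nat
  assumes "n > 0"
  shows "card {d. d dvd n ^ e} = (\<Prod>p\<in>prime_factors n. e * multiplicity p n + 1)"
proof (cases "e = 0")
  case False
  have "card {d. d dvd n ^ e} = (\<Prod>p\<in>prime_factors (n ^ e). multiplicity p (n ^ e) + 1)"
    using assms by (simp add: card_divisors_nat)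
  also have "\<dots> = (\<Prod>p\<in>prime_factors n. e * multiplicity p n + 1)"
  proof (rule prod.cong)
    show "prime_factors (n ^ e) = prime_factors n"
      using False by (simp add: prime_factors_power)
    show "multiplicity p (n ^ e) + 1 = e * multiplicity p n + 1" if "p \<in> prime_factors n" for p
      using assms prime_imp_prime_elem[OF in_prime_factors_imp_prime[OF that]]
      by (simp add: prime_elem_multiplicity_power_distrib)
  qed
  finally show ?thesis .
qed simp

lemma T0Tstar_perfect_iff:
  fixes n K :: nat
  assumes n: "n > 1"
  defines "s \<equiv> card (prime_factors n)"
  shows "T0Tstar_perfect K n \<longleftrightarrow>
    2 \<le> K \<and> 2 * K = 2 ^ (s - 1) * (\<Prod>p\<in>prime_factors n. 2 ^ (s - 1) * multiplicity p n + 1)"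
    (is "_ \<longleftrightarrow> _ \<and> 2 * K = ?e")
proof -
  define m where "m = unitary_divisor_prod n"
  have m: "m = n ^ 2 ^ (s - 1)"
    using n unfolding m_def s_def by (simp add: unitary_divisor_prod_eq_power)
  have "divisor_prod m ^ 2 = m ^ card {d. d dvd m}"
    using n by (simp add: m divisor_prod_square)
  also have "\<dots> = (n ^ 2 ^ (s - 1)) ^ (\<Prod>p\<in>prime_factors n. 2 ^ (s - 1) * multiplicity p n + 1)"
    using n by (simp only: m card_divisors_power)
  also have "\<dots> = n ^ ?e"
    by (simp only: power_mult)
  finally have square: "divisor_prod m ^ 2 = n ^ ?e" .
  have "divisor_prod m = n ^ K \<longleftrightarrow> divisor_prod m ^ 2 = (n ^ K) ^ 2"
    by (rule power_eq_iff_eq_base[symmetric]) simp_all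
  also have "\<dots> \<longleftrightarrow> n ^ ?e = n ^ (2 * K)"
    by (simp only: square mult.commute[of 2 K] power_mult)
  also have "\<dots> \<longleftrightarrow> ?e = 2 * K"
    using n by (simp add: power_inject_exp)
  finally show ?thesis
    using n unfolding T0Tstar_perfect_def m_def by auto
qed

lemma T0Tstar_perfect_prime_power_iff:
  fixes q e K :: nat
  assumes "prime q" "e > 0"
  shows "T0Tstar_perfect K (q ^ e) \<longleftrightarrow> 2 \<le> K \<and> 2 * K = e + 1"
proof -
  have "q ^ e > 1" using assms prime_gt_1_nat one_less_power by blast
  moreover have "prime_factors (q ^ e) = {q}"
    using assms by (simp add: prime_factors_power prime_prime_factors)
  ultimately show ?thesis
    using assms by (simp add: T0Tstar_perfect_iff)
qed

lemma T0Tstar_perfect_two_prime_powers_iff: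
  fixes q1 q2 e1 e2 K :: nat
  assumes q: "prime q1" "prime q2" "q1 \<noteq> q2" and e: "e1 > 0" "e2 > 0"
  shows "T0Tstar_perfect K (q1 ^ e1 * q2 ^ e2) \<longleftrightarrow> 2 \<le> K \<and> K = (2 * e1 + 1) * (2 * e2 + 1)"
proof -
  have pos: "q1 ^ e1 > 0" "q2 ^ e2 > 0" using q prime_gt_0_nat by simp_all
  have "q1 ^ e1 > 1" "q2 ^ e2 > 1" using q e prime_gt_1_nat one_less_power by blast+
  hence n: "q1 ^ e1 * q2 ^ e2 > 1" by (rule less_1_mult)
  have "prime_factors (q1 ^ e1 * q2 ^ e2) = prime_factors (q1 ^ e1) \<union> prime_factors (q2 ^ e2)"
    using pos by (simp add: prime_factors_product)
  also have "\<dots> = {q1, q2}"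
    using q e by (auto simp: prime_factors_power prime_prime_factors)
  finally have PF: "prime_factors (q1 ^ e1 * q2 ^ e2) = {q1, q2}" .
  have mult: "multiplicity q (q1 ^ e1 * q2 ^ e2) = multiplicity q (q1 ^ e1) + multiplicity q (q2 ^ e2)"
    if "prime q" for q
    using pos that by (simp add: prime_elem_multiplicity_mult_distrib)
  have "multiplicity q1 (q1 ^ e1 * q2 ^ e2) = e1" "multiplicity q2 (q1 ^ e1 * q2 ^ e2) = e2"
    using q by (simp_all add: mult multiplicity_distinct_prime_power)
  with PF show ?thesis
    using q by (simp add: T0Tstar_perfect_iff[OF n]) arith
qed

lemma T0Tstar_perfect_prime_power_card_prime_factors:
  fixes p k n :: nat
  assumes p: "prime p" and k: "k > 0" and perfect: "T0Tstar_perfect (p ^ k) n"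
  shows "card (prime_factors n) \<le> 2"
proof (rule ccontr)
  define s where "s = card (prime_factors n)"
  define X where "X = (\<Prod>q\<in>prime_factors n. 2 ^ (s - 1) * multiplicity q n + 1)"
  assume "\<not> card (prime_factors n) \<le> 2"
  hence s: "s \<ge> 3" unfolding s_def by simp
  have n: "n > 1" using perfect unfolding T0Tstar_perfect_def by simp
  have eq: "2 * p ^ k = 2 ^ (s - 1) * X"
    using perfect unfolding T0Tstar_perfect_iff[OF n] s_def X_def by simp
  have "odd X" using s unfolding X_def by (simp add: even_prod_iff)
  have "s > 0" using s by simp
  then obtain q where q: "q \<in> prime_factors n" unfolding s_def by (metis card_gt_0_iff ex_in_conv)
  have "2 ^ (s - 1) * multiplicity q n + 1 dvd X"
    unfolding X_def using q by (intro dvd_prodI) simp_all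
  hence "2 ^ (s - 1) * multiplicity q n + 1 \<le> X"
    using \<open>odd X\<close> odd_pos by (blast intro: dvd_imp_le)
  moreover have "2 ^ (s - 1) * multiplicity q n > 0" using q by (simp add: prime_factors_multiplicity)
  ultimately have "X > 1" by linarith
  have "(2::nat) ^ (s - 1) = 2 * 2 ^ (s - 2)"
    using s by (simp flip: power_Suc)
  hence pk: "p ^ k = 2 ^ (s - 2) * X" using eq by simp
  hence "even (p ^ k)" using s by simp
  hence "even p" using k by simp
  hence "p = 2" using p unfolding prime_nat_iff by force
  hence "X dvd 2 ^ k" using pk by simp
  then obtain i where "X = 2 ^ i" by (auto simp: divides_primepow_nat)
  with \<open>odd X\<close> \<open>X > 1\<close> show False by (cases i) simp_all
qed

lemma prime_power_eq_mult_odd_factors: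
  fixes p k f1 f2 :: nat
  assumes p: "prime p" and eq: "p ^ k = (2 * f1 + 1) * (2 * f2 + 1)" and f: "f1 > 0" "f2 > 0"
  obtains a1 a2 where "odd p" "a1 > 0" "a2 > 0" "a1 + a2 = k"
    "f1 = (p ^ a1 - 1) div 2" "f2 = (p ^ a2 - 1) div 2"
proof -
  obtain a1 a2 where a: "2 * f1 + 1 = p ^ a1" "2 * f2 + 1 = p ^ a2"
    using prime_power_mult_nat[OF p eq[symmetric]] by blast
  have "a1 > 0" "a2 > 0" using a f by (auto intro!: gr0I)
  have "odd (p ^ a1)" by (simp flip: a(1))
  hence "odd p" using \<open>a1 > 0\<close> by simp
  have "p ^ k = p ^ (a1 + a2)" unfolding eq power_add a ..
  hence "a1 + a2 = k" using p prime_gt_1_nat power_inject_exp by metis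
  moreover have "f1 = (p ^ a1 - 1) div 2" "f2 = (p ^ a2 - 1) div 2"
    using a by (simp_all flip: a)
  ultimately show ?thesis using that \<open>odd p\<close> \<open>a1 > 0\<close> \<open>a2 > 0\<close> by blast
qed

lemma T0Tstar_perfect_prime_power_cases:
  fixes p k n :: nat
  assumes p: "prime p" and k: "k > 0" and perfect: "T0Tstar_perfect (p ^ k) n"
  shows "(\<exists>p1::nat. prime p1 \<and> n = p1 ^ (2 * p ^ k - 1))
    \<or> (odd p \<and> (\<exists>p1 p2 a1 a2 :: nat. prime p1 \<and> prime p2 \<and> p1 \<noteq> p2 \<and> 0 < a1 \<and> 0 < a2
          \<and> a1 + a2 = k \<and> n = p1 ^ ((p ^ a1 - 1) div 2) * p2 ^ ((p ^ a2 - 1) div 2)))"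
proof -
  have n: "n > 1" using perfect unfolding T0Tstar_perfect_def by simp
  have factorization: "n = (\<Prod>q\<in>prime_factors n. q ^ multiplicity q n)"
    using n by (simp add: prime_factorization_nat)
  have exps: "multiplicity q n > 0" if "q \<in> prime_factors n" for q
    using that by (simp add: prime_factors_multiplicity)
  obtain q where "q \<in> prime_factors n"
    using n prime_factor_nat[of n] by (auto simp: in_prime_factors_iff)
  hence "card (prime_factors n) \<noteq> 0" by (auto simp: card_eq_0_iff)
  with T0Tstar_perfect_prime_power_card_prime_factors[OF p k perfect]
  consider "card (prime_factors n) = 1" | "card (prime_factors n) = 2" by linarith
  thus ?thesis
  proof cases
    case 1
    then obtain q where Q: "prime_factors n = {q}" by (auto simp: card_Suc_eq)
    hence q: "prime q" and n_eq: "n = q ^ multiplicity q n" using factorization by auto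
    have "2 * p ^ k = multiplicity q n + 1"
      using perfect T0Tstar_perfect_prime_power_iff[OF q exps] Q n_eq by simp
    hence "n = q ^ (2 * p ^ k - 1)" using n_eq by simp
    with q show ?thesis by blast
  next
    case 2
    then obtain q1 q2 where Q: "prime_factors n = {q1, q2}" "q1 \<noteq> q2" by (auto simp: card_2_iff)
    hence q: "prime q1" "prime q2" by auto
    define e1 e2 where "e1 = multiplicity q1 n" and "e2 = multiplicity q2 n"
    have e: "e1 > 0" "e2 > 0" using exps Q unfolding e1_def e2_def by auto
    have n_eq: "n = q1 ^ e1 * q2 ^ e2" using factorization Q unfolding e1_def e2_def by simp
    have "p ^ k = (2 * e1 + 1) * (2 * e2 + 1)"
      using perfect T0Tstar_perfect_two_prime_powers_iff[OF q Q(2) e] n_eq by simp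
    then obtain a1 a2 where "odd p" "a1 > 0" "a2 > 0" "a1 + a2 = k"
      "e1 = (p ^ a1 - 1) div 2" "e2 = (p ^ a2 - 1) div 2"
      using prime_power_eq_mult_odd_factors[OF p _ e] by blast
    with q Q(2) n_eq show ?thesis by blast
  qed
qed

lemma odd_power_half:
  fixes p a :: nat
  assumes "odd p" "p > 1" "a > 0"
  shows "2 * ((p ^ a - 1) div 2) + 1 = p ^ a" "(p ^ a - 1) div 2 > 0"
proof -
  have "odd (p ^ a)" using assms by simp
  moreover have "p ^ a \<ge> 3" using assms self_le_power[of p a] by presburger
  ultimately show "2 * ((p ^ a - 1) div 2) + 1 = p ^ a" "(p ^ a - 1) div 2 > 0" by presburger+
qed

theorem mainTheorem8:
  fixes k p :: nat
  assumes "0 < k" and "prime p"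
  shows "(\<forall>p1::nat. prime p1 \<longrightarrow> T0Tstar_perfect (p ^ k) (p1 ^ (2 * p ^ k - 1)))
    \<and> ((2 \<le> k \<and> odd p) \<longrightarrow>
        (\<forall>p1 p2 a1 a2 :: nat. prime p1 \<and> prime p2 \<and> p1 \<noteq> p2 \<and> 0 < a1 \<and> 0 < a2 \<and> a1 + a2 = k
           \<longrightarrow> T0Tstar_perfect (p ^ k) (p1 ^ ((p ^ a1 - 1) div 2) * p2 ^ ((p ^ a2 - 1) div 2))))
    \<and> (\<forall>n::nat. 1 < n \<and> T0Tstar_perfect (p ^ k) n \<longrightarrow>
        (\<exists>p1::nat. prime p1 \<and> n = p1 ^ (2 * p ^ k - 1))
        \<or> (odd p \<and> (\<exists>p1 p2 a1 a2 :: nat. prime p1 \<and> prime p2 \<and> p1 \<noteq> p2 \<and> 0 < a1 \<and> 0 < a2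
              \<and> a1 + a2 = k \<and> n = p1 ^ ((p ^ a1 - 1) div 2) * p2 ^ ((p ^ a2 - 1) div 2))))"
proof -
  have p: "p > 1" using \<open>prime p\<close> prime_gt_1_nat by blast
  have K: "2 \<le> p ^ k"
    using prime_ge_2_nat[OF \<open>prime p\<close>] self_le_power[of p k] \<open>0 < k\<close> by linarith
  show ?thesis
  proof (intro conjI allI impI)
    fix q :: nat assume "prime q"
    thus "T0Tstar_perfect (p ^ k) (q ^ (2 * p ^ k - 1))"
      using K by (simp add: T0Tstar_perfect_prime_power_iff)
  next
    fix q1 q2 a1 a2 :: nat
    assume "2 \<le> k \<and> odd p" and "prime q1 \<and> prime q2 \<and> q1 \<noteq> q2 \<and> 0 < a1 \<and> 0 < a2 \<and> a1 + a2 = k"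
    hence q: "prime q1" "prime q2" "q1 \<noteq> q2" and a: "0 < a1" "0 < a2" "a1 + a2 = k" and "odd p"
      by auto
    note e1 = odd_power_half[OF \<open>odd p\<close> p a(1)] and e2 = odd_power_half[OF \<open>odd p\<close> p a(2)]
    have "p ^ k = (2 * ((p ^ a1 - 1) div 2) + 1) * (2 * ((p ^ a2 - 1) div 2) + 1)"
      unfolding e1(1) e2(1) a(3)[symmetric] by (rule power_add)
    thus "T0Tstar_perfect (p ^ k) (q1 ^ ((p ^ a1 - 1) div 2) * q2 ^ ((p ^ a2 - 1) div 2))"
      using K T0Tstar_perfect_two_prime_powers_iff[OF q e1(2) e2(2)] by simp
  next
    fix n :: nat assume "1 < n \<and> T0Tstar_perfect (p ^ k) n"
    thus "(\<exists>p1::nat. prime p1 \<and> n = p1 ^ (2 * p ^ k - 1))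
          \<or> (odd p \<and> (\<exists>p1 p2 a1 a2 :: nat. prime p1 \<and> prime p2 \<and> p1 \<noteq> p2 \<and> 0 < a1 \<and> 0 < a2
                \<and> a1 + a2 = k \<and> n = p1 ^ ((p ^ a1 - 1) div 2) * p2 ^ ((p ^ a2 - 1) div 2)))"
      using T0Tstar_perfect_prime_power_cases assms by blast
  qed
qed

end
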